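(* Let $\alpha = (\alpha_{rs})_{r,s=1}^k$ be a $k\times k$ doubly stochastic matrix and let $\beta = \frac{1}{k}\max_{\pi}\sum_{r=1}^k \alpha_{r,\pi(r)}$, where the maximum is over all permutations $\pi$ of $\{1,\dots,k\}$. Then \[ |\alpha|^2 := \sum_{r,s}\alpha_{rs}^2 \le k\beta . \]
   Context: A doubly stochastic matrix has nonnegative entries with every row sum and column sum equal to $1$. $|\alpha|$ denotes the Frobenius norm. *)

theory Defs
  imports "HOL-Analysis.Analysis" "HOL-Combinatorics.Permutations"
begin

definition doubly_stochastic :: "real^'n^'n \<Rightarrow> bool" where
  "doubly_stochastic A \<longleftrightarrow>
     (\<forall>r s. 0 \<le> A $ r $ s) \<and>
     (\<forall>r. (\<Sum>s\<in>UNIV. A $ r $ s) = 1) \<and>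
     (\<forall>s. (\<Sum>r\<in>UNIV. A $ r $ s) = 1)"

definition frob_norm_sq :: "real^'n^'n \<Rightarrow> real" where
  "frob_norm_sq A = (\<Sum>r\<in>UNIV. \<Sum>s\<in>UNIV. (A $ r $ s)^2)"

end

(*
  Birkhoff--von Neumann, in the form needed here: if D \<ge> 0 has all row and column sums equal
  to c > 0, Hall's theorem yields a permutation \<pi> with D r (\<pi> r) > 0 for all r; subtracting
  m = min_r D r (\<pi> r) times the permutation matrix of \<pi> leaves a matrix of the same kind with
  line sums c - m and strictly smaller support. By induction on the support, every linear
  functional D \<mapsto> \<Sum> W r s * D r s is at most c * max_\<pi> \<Sum>_r W r (\<pi> r). Taking W = D = \<alpha>
  gives |\<alpha>|^2 \<le> max_\<pi> \<Sum>_r \<alpha>_{r,\<pi> r} = k\<beta>.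
*)

theory Submission
  imports Defs
begin

lemma hall_condition_remove_element:
  fixes S :: "'a \<Rightarrow> 'b set"
  assumes surplus: "\<And>X. X \<subseteq> A \<Longrightarrow> X \<noteq> {} \<Longrightarrow> X \<noteq> A \<Longrightarrow> card X < card (\<Union>(S ` X))"
    and "a \<in> A" "Y \<subseteq> A - {a}"
  shows "card Y \<le> card (\<Union>x\<in>Y. S x - {b})"
proof (cases "Y = {}")
  case False
  with assms have "card Y < card (\<Union>(S ` Y))" by blast
  moreover have "card (\<Union>(S ` Y)) - 1 \<le> card (\<Union>(S ` Y) - {b})"
    by (simp add: card_Diff_singleton_if)
  moreover have "(\<Union>x\<in>Y. S x - {b}) = \<Union>(S ` Y) - {b}" by blast
  ultimately show ?thesis by simp
qed simp

lemma hall_condition_remove_tight: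
  fixes S :: "'a \<Rightarrow> 'b set"
  assumes "finite A" "\<And>a. a \<in> A \<Longrightarrow> finite (S a)"
    and hall: "\<And>X. X \<subseteq> A \<Longrightarrow> card X \<le> card (\<Union>(S ` X))"
    and tight: "X \<subseteq> A" "card (\<Union>(S ` X)) \<le> card X"
    and "Y \<subseteq> A - X"
  shows "card Y \<le> card (\<Union>y\<in>Y. S y - \<Union>(S ` X))"
proof -
  have XY: "X \<union> Y \<subseteq> A" "finite X" "finite Y" "X \<inter> Y = {}"
    using assms by (auto intro: finite_subset)
  have "finite (\<Union>(S ` (X \<union> Y)))" using XY assms(2) by (intro finite_UN_I) auto
  moreover have "(\<Union>y\<in>Y. S y - \<Union>(S ` X)) = \<Union>(S ` (X \<union> Y)) - \<Union>(S ` X)" by blast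
  ultimately have "card (\<Union>y\<in>Y. S y - \<Union>(S ` X)) = card (\<Union>(S ` (X \<union> Y))) - card (\<Union>(S ` X))"
    by (simp add: card_Diff_subset finite_subset SUP_subset_mono)
  moreover have "card (\<Union>(S ` X)) = card X" using hall tight by (simp add: antisym)
  moreover have "card X + card Y \<le> card (\<Union>(S ` (X \<union> Y)))"
    using hall[OF XY(1)] XY by (simp add: card_Un_disjoint)
  ultimately show ?thesis by linarith
qed

theorem hall_marriage:
  fixes S :: "'a \<Rightarrow> 'b set"
  assumes "finite A" "\<And>a. a \<in> A \<Longrightarrow> finite (S a)"
    and "\<And>X. X \<subseteq> A \<Longrightarrow> card X \<le> card (\<Union>(S ` X))"
  shows "\<exists>f. inj_on f A \<and> (\<forall>a\<in>A. f a \<in> S a)"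
  using assms
proof (induction A arbitrary: S rule: finite_psubset_induct)
  case (psubset A)
  txt \<open>Either every proper nonempty subset has a surplus of candidates, so any choice for one
    element can be removed; or some proper subset X is tight, and X and A - X are matched
    separately, the latter avoiding the candidates used up by X.\<close>
  consider "A = {}"
    | (surplus) "\<And>X. X \<subseteq> A \<Longrightarrow> X \<noteq> {} \<Longrightarrow> X \<noteq> A \<Longrightarrow> card X < card (\<Union>(S ` X))" "A \<noteq> {}"
    | (tight) X where "X \<subseteq> A" "X \<noteq> {}" "X \<noteq> A" "card (\<Union>(S ` X)) \<le> card X"
    by (meson not_less)
  then show ?case
  proof cases
    case surplus
    then obtain a where a: "a \<in> A" by blast
    with psubset.prems(2)[of "{a}"] obtain b where b: "b \<in> S a" by fastforce
    have "\<exists>g. inj_on g (A - {a}) \<and> (\<forall>x\<in>A - {a}. g x \<in> S x - {b})"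
      using a psubset.prems(1) hall_condition_remove_element[OF surplus(1) a]
      by (intro psubset.IH) auto
    then obtain g where g: "inj_on g (A - {a})" "\<forall>x\<in>A - {a}. g x \<in> S x - {b}" by blast
    then have "inj_on (g(a := b)) A \<and> (\<forall>x\<in>A. (g(a := b)) x \<in> S x)"
      using b by (auto simp: inj_on_def)
    then show ?thesis by blast
  next
    case tight
    obtain g where g: "inj_on g X" "\<forall>x\<in>X. g x \<in> S x"
      using psubset.IH[of X S] tight psubset.prems by auto
    define N where "N = \<Union>(S ` X)"
    have "\<exists>h. inj_on h (A - X) \<and> (\<forall>x\<in>A - X. h x \<in> S x - N)"
    proof (rule psubset.IH[of "A - X" "\<lambda>x. S x - N"])
      show "\<And>Y. Y \<subseteq> A - X \<Longrightarrow> card Y \<le> card (\<Union>y\<in>Y. S y - N)"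
        unfolding N_def
        by (rule hall_condition_remove_tight[OF psubset.hyps(1) psubset.prems tight(1,4)])
    qed (use tight(1,2) psubset.prems(1) in auto)
    then obtain h where h: "inj_on h (A - X)" "\<forall>x\<in>A - X. h x \<in> S x - N" by blast
    have "g ` X \<subseteq> N" using g(2) by (auto simp: N_def)
    have "inj_on (\<lambda>x. if x \<in> X then g x else h x) (X \<union> (A - X))"
    proof (rule inj_on_disjoint_Un[OF g(1) h(1)])
      show "g ` X \<inter> h ` (A - X) = {}" using \<open>g ` X \<subseteq> N\<close> h(2) by fastforce
    qed
    then have "inj_on (\<lambda>x. if x \<in> X then g x else h x) A"
      using tight(1) by (simp add: Un_absorb1)
    moreover have "\<forall>x\<in>A. (if x \<in> X then g x else h x) \<in> S x" using g(2) h(2) by auto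
    ultimately show ?thesis by blast
  qed auto
qed

definition nonneg_semimagic :: "('k::finite \<Rightarrow> 'k \<Rightarrow> real) \<Rightarrow> real \<Rightarrow> bool" where
  "nonneg_semimagic D c \<longleftrightarrow>
     (\<forall>r s. 0 \<le> D r s) \<and> (\<forall>r. (\<Sum>s\<in>UNIV. D r s) = c) \<and> (\<forall>s. (\<Sum>r\<in>UNIV. D r s) = c)"

definition matrix_support :: "('k \<Rightarrow> 'k \<Rightarrow> 'a::zero) \<Rightarrow> ('k \<times> 'k) set" where
  "matrix_support D = {(r, s). D r s \<noteq> 0}"

lemma nonneg_semimagic_hall_condition:
  assumes "nonneg_semimagic D c" "0 < c"
  shows "card X \<le> card (\<Union>r\<in>X. {s. 0 < D r s})"
proof -
  define N where "N = (\<Union>r\<in>X. {s. 0 < D r s})"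
  have nn: "\<And>r s. 0 \<le> D r s" using assms(1) by (simp add: nonneg_semimagic_def)
  have "c * card X = (\<Sum>r\<in>X. \<Sum>s\<in>UNIV. D r s)"
    using assms(1) by (simp add: nonneg_semimagic_def)
  also have "\<dots> = (\<Sum>r\<in>X. \<Sum>s\<in>N. D r s)"
  proof (rule sum.cong[OF refl])
    fix r assume "r \<in> X"
    have "D r s = 0" if "s \<notin> N" for s
    proof -
      have "\<not> 0 < D r s" using \<open>r \<in> X\<close> that by (auto simp: N_def)
      with nn[of r s] show ?thesis by linarith
    qed
    then show "(\<Sum>s\<in>UNIV. D r s) = (\<Sum>s\<in>N. D r s)"
      by (intro sum.mono_neutral_right) auto
  qed
  also have "\<dots> = (\<Sum>s\<in>N. \<Sum>r\<in>X. D r s)" by (rule sum.swap)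
  also have "\<dots> \<le> (\<Sum>s\<in>N. \<Sum>r\<in>UNIV. D r s)"
    by (intro sum_mono sum_mono2) (auto simp: nn)
  also have "\<dots> = c * card N"
    using assms(1) by (simp add: nonneg_semimagic_def)
  finally show ?thesis using assms(2) by (simp add: N_def)
qed

lemma nonneg_semimagic_positive_permutation:
  assumes "nonneg_semimagic D c" "0 < c"
  obtains \<pi> where "\<pi> permutes (UNIV :: 'k::finite set)" "\<And>r. 0 < D r (\<pi> r)"
proof -
  obtain f :: "'k \<Rightarrow> 'k" where f: "inj f" "\<And>r. 0 < D r (f r)"
    using hall_marriage[of UNIV "\<lambda>r. {s. 0 < D r s}"]
      nonneg_semimagic_hall_condition[OF assms] by auto
  then have "bij f" by (simp add: bij_def finite_UNIV_inj_surj)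
  then have "f permutes UNIV" by (intro bij_imp_permutes) auto
  with f(2) that show ?thesis by blast
qed

lemma sum_permutation_indicator:
  assumes "\<pi> permutes (UNIV :: 'k::finite set)"
  shows "(\<Sum>r\<in>UNIV. if s = \<pi> r then m else 0) = (m :: real)"
proof -
  have "\<And>r. s = \<pi> r \<longleftrightarrow> r = inv \<pi> s"
    using assms by (auto simp: permutes_inverses)
  then show ?thesis by simp
qed

lemma nonneg_semimagic_peel_permutation:
  assumes D: "nonneg_semimagic D c" and "0 < c"
  obtains \<pi> m D' where "\<pi> permutes (UNIV :: 'k::finite set)" "0 < m"
    "nonneg_semimagic D' (c - m)" "matrix_support D' \<subset> matrix_support D"
    "\<And>r s. D r s = D' r s + (if s = \<pi> r then m else 0)"
proof -
  obtain \<pi> where \<pi>: "\<pi> permutes (UNIV :: 'k set)" "\<And>r. 0 < D r (\<pi> r)"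
    using nonneg_semimagic_positive_permutation[OF assms] by blast
  define m where "m = Min (range (\<lambda>r. D r (\<pi> r)))"
  have "m \<in> range (\<lambda>r. D r (\<pi> r))"
    unfolding m_def by (rule Min_in) auto
  then obtain r0 where r0: "D r0 (\<pi> r0) = m" by blast
  have m_le: "\<And>r. m \<le> D r (\<pi> r)" by (simp add: m_def)
  define D' where "D' = (\<lambda>r s. D r s - (if s = \<pi> r then m else 0))"
  have "nonneg_semimagic D' (c - m)"
    using D m_le sum_permutation_indicator[OF \<pi>(1)]
    by (auto simp: nonneg_semimagic_def D'_def sum_subtractf)
  moreover have "matrix_support D' \<subset> matrix_support D"
  proof
    show "matrix_support D' \<subseteq> matrix_support D"
      using \<pi>(2) by (auto simp: matrix_support_def D'_def) (metis less_irrefl)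
    txt \<open>The entry at (r0, \<pi> r0) realises the minimum and becomes zero.\<close>
    show "matrix_support D' \<noteq> matrix_support D"
      using r0 \<pi>(2)[of r0] by (auto simp: matrix_support_def D'_def)
  qed
  ultimately show ?thesis
    using that[OF \<pi>(1)] \<pi>(2)[of r0] r0 by (simp add: D'_def)
qed

theorem nonneg_semimagic_weighted_sum_le:
  fixes W :: "'k::finite \<Rightarrow> 'k \<Rightarrow> real"
  assumes "nonneg_semimagic D c"
  shows "(\<Sum>r\<in>UNIV. \<Sum>s\<in>UNIV. W r s * D r s)
           \<le> c * Max ((\<lambda>\<pi>. \<Sum>r\<in>UNIV. W r (\<pi> r)) ` {\<pi>. \<pi> permutes (UNIV :: 'k set)})"
  (is "?sum D \<le> c * ?M")
  using assms
proof (induction "card (matrix_support D)" arbitrary: D c rule: less_induct)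
  case less
  have "0 \<le> c"
    using less.prems by (metis nonneg_semimagic_def sum_nonneg)
  show ?case
  proof (cases "c = 0")
    case True
    with less.prems have "\<And>r s. D r s = 0"
      unfolding nonneg_semimagic_def by (metis finite sum_nonneg_eq_0_iff iso_tuple_UNIV_I)
    with True show ?thesis by simp
  next
    case False
    with \<open>0 \<le> c\<close> obtain \<pi> m D' where \<pi>: "\<pi> permutes UNIV" and "0 < m"
      and D': "nonneg_semimagic D' (c - m)" "matrix_support D' \<subset> matrix_support D"
      and split: "\<And>r s. D r s = D' r s + (if s = \<pi> r then m else 0)"
      using nonneg_semimagic_peel_permutation[OF less.prems] by (metis order_le_less)
    have "?sum D = ?sum D' + m * (\<Sum>r\<in>UNIV. W r (\<pi> r))"
      by (simp add: split distrib_left sum.distrib sum_distrib_left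
          if_distrib[of "(*) (W _ _)"] mult.commute cong: if_cong)
    also have "\<dots> \<le> (c - m) * ?M + m * ?M"
    proof (rule add_mono)
      show "?sum D' \<le> (c - m) * ?M"
        using D' by (intro less.hyps) (auto intro: psubset_card_mono)
      show "m * (\<Sum>r\<in>UNIV. W r (\<pi> r)) \<le> m * ?M"
        using \<pi> \<open>0 < m\<close> by (intro mult_left_mono Max_ge) (auto intro: finite_permutations)
    qed
    finally show ?thesis by (simp add: algebra_simps)
  qed
qed

theorem mainTheorem4:
  fixes \<alpha> :: "real^'k^'k" and \<beta> :: real
  assumes "doubly_stochastic \<alpha>"
    and "\<beta> = (1 / real CARD('k)) *
               Max ((\<lambda>\<pi>. \<Sum>r\<in>UNIV. \<alpha> $ r $ \<pi> r) ` {\<pi>. \<pi> permutes (UNIV :: 'k set)})"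
  shows "frob_norm_sq \<alpha> \<le> real CARD('k) * \<beta>"
proof -
  have "nonneg_semimagic (\<lambda>r s. \<alpha> $ r $ s) 1"
    using assms(1) by (simp add: doubly_stochastic_def nonneg_semimagic_def)
  then have "(\<Sum>r\<in>UNIV. \<Sum>s\<in>UNIV. \<alpha> $ r $ s * \<alpha> $ r $ s)
      \<le> 1 * Max ((\<lambda>\<pi>. \<Sum>r\<in>UNIV. \<alpha> $ r $ \<pi> r) ` {\<pi>. \<pi> permutes (UNIV :: 'k set)})"
    by (rule nonneg_semimagic_weighted_sum_le)
  then show ?thesis
    using assms(2) by (simp add: frob_norm_sq_def power2_eq_square)
qed

end
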